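(* Let $d\ge2$, $q\ge2$, let $p\in\mathbb{Z}/q\mathbb{Z}$ with $\gcd(p,q)=1$ (take the representative $1\le p\le q-1$), and let $p^*$ be the inverse of $p$ in $\mathbb{Z}/q\mathbb{Z}$. Let $t=(a_0,a_1,\dots,a_{q-1})\in\mathbb{T}$ (in $q$-tuple notation) have $\sigma_d$-orbit $\mathcal{O}$ of size $q$. Then $t$ is the least element of $\mathcal{O}$ and $\mathcal{O}$ is $\sigma_d$-rotational with rotation number $p/q$ if and only if $$a_0\le a_{p^*}\le a_{2p^*}\le\dots\le a_{-(p+1)p^*}<a_{-pp^*}\le\dots\le a_{(q-1)p^*},$$ i.e. $a_{kp^*}\le a_{(k+1)p^*}$ for all $0\le k\le q-2$, with strict inequality for $k=q-p-1$.
   Context: $\mathbb{T}=\mathbb{R}/\mathbb{Z}$, totally ordered by representatives in $[0,1)$; $\sigma_d(t)=dt$. An orbit $\mathcal{O}=\{t_0<\dots<t_{q-1}\}$ (indices in $\mathbb{Z}/q\mathbb{Z}$) is $\sigma_d$-rotational with rotation number $p/q$ if $\sigma_d(t_i)=t_{i+p}$ for all $i$. $q$-tuple notation: $(a_0,\dots,a_{q-1})$ with $a_i\in\{0,\dots,d-1\}$ denotes the point with base-$d$ expansion $0.\overline{a_0a_1\dots a_{q-1}}$; digit indices are read in $\mathbb{Z}/q\mathbb{Z}$. *)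

theory Defs
  imports Complex_Main
begin

text \<open>The circle T = R/Z is represented by reals in [0,1), ordered as reals.\<close>

definition sigma :: "nat \<Rightarrow> real \<Rightarrow> real" where
  "sigma d x = frac (real d * x)"

definition orbit :: "nat \<Rightarrow> real \<Rightarrow> real set" where
  "orbit d x = {((sigma d) ^^ n) x | n. True}"

text \<open>The point with periodic base-d expansion 0.(a_0 a_1 ... a_{q-1}) repeated,
  taken modulo 1.\<close>
definition tuple_point :: "nat \<Rightarrow> nat \<Rightarrow> (nat \<Rightarrow> nat) \<Rightarrow> real" where
  "tuple_point d q a =
     frac ((\<Sum>i<q. real (a i) * real d ^ (q - 1 - i)) / (real d ^ q - 1))"

definition rotational :: "nat \<Rightarrow> real set \<Rightarrow> nat \<Rightarrow> nat \<Rightarrow> bool" where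
  "rotational d Orb p q \<longleftrightarrow>
     (\<exists>e :: nat \<Rightarrow> real. strict_mono_on {..<q} e \<and> e ` {..<q} = Orb \<and>
        (\<forall>i<q. sigma d (e i) = e ((i + p) mod q)))"

end

theory Submission
  imports Defs
begin

text \<open>Write \<open>t_j = \<sigma>_d^j(t)\<close>: its digit string is that of \<open>t\<close> rotated by \<open>j\<close>, and since
  not all digits equal \<open>d - 1\<close> these points satisfy \<open>d t_j = a_j + t_(j+1)\<close>. With \<open>p* = ps\<close>,
  the orbit is rotational with least element \<open>t\<close> exactly when \<open>k \<mapsto> t_(k p*)\<close> is increasing,
  because \<open>\<sigma>_d\<close> then moves the \<open>k\<close>-th point to the \<open>(k+p)\<close>-th. The leading digits
  \<open>a_(k p*) = \<lfloor>d t_(k p*)\<rfloor>\<close> are then weakly increasing, and they must jump at \<open>k = q-p-1\<close>,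
  since that point and its successor are mapped to the largest and the smallest point.
  Conversely, a tie between consecutive leading digits passes the comparison on from \<open>k\<close> to
  \<open>k+p\<close>, and as \<open>p\<close> is invertible modulo \<open>q\<close> every index eventually reaches the jump.\<close>

lemma strict_mono_on_lessThan_iff:
  fixes f :: "nat \<Rightarrow> 'a::order"
  shows "strict_mono_on {..<q} f \<longleftrightarrow> (\<forall>k. Suc k < q \<longrightarrow> f k < f (Suc k))"
proof
  assume step: "\<forall>k. Suc k < q \<longrightarrow> f k < f (Suc k)"
  have "f i < f j" if "i < j" "j < q" for i j
    using that
  proof (induction j)
    case (Suc j)
    then show ?case
      using step by (cases "i = j") (auto intro: order.strict_trans)
  qed simp
  then show "strict_mono_on {..<q} f"
    by (auto intro: strict_mono_onI)
qed (simp add: strict_mono_onD)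

lemma mod_mult_inverse_cancel:
  fixes k p ps q :: nat
  assumes "(p * ps) mod q = 1" "k < q"
  shows "(k * ps * p) mod q = k"
proof -
  have "(k * ps * p) mod q = (k * ((p * ps) mod q)) mod q"
    by (simp add: mod_mult_right_eq algebra_simps)
  then show ?thesis using assms by simp
qed

lemma mod_mult_inverse_add:
  fixes k p ps q :: nat
  assumes "(p * ps) mod q = 1"
  shows "((k + p) mod q * ps) mod q = Suc (k * ps) mod q"
proof -
  have "((k + p) mod q * ps) mod q = (k * ps + p * ps) mod q"
    by (simp add: mod_mult_left_eq add_mult_distrib)
  also have "\<dots> = (k * ps + (p * ps) mod q) mod q"
    by (simp add: mod_add_right_eq)
  finally show ?thesis using assms by simp
qed

lemma Suc_add_mod:
  fixes k p q :: nat
  assumes "k < q" "p < q" "k \<noteq> q - p - 1"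
  shows "Suc ((k + p) mod q) < q" and "(Suc k + p) mod q = Suc ((k + p) mod q)"
proof -
  have "(k + p) mod q \<noteq> q - 1"
  proof (cases "k + p < q")
    case False
    then have "(k + p) mod q = k + p - q" using assms by (simp add: le_mod_geq)
    then show ?thesis using assms by simp
  qed (use assms in simp)
  moreover have "(k + p) mod q < q" using assms by simp
  ultimately show "Suc ((k + p) mod q) < q" by simp
  then show "(Suc k + p) mod q = Suc ((k + p) mod q)"
    by (simp add: mod_Suc)
qed

lemma mod_add_mult_inverse:
  fixes k j p ps q :: nat
  assumes "(p * ps) mod q = 1" "k < q" "j < q"
  shows "(k + (j + q - k) * ps * p) mod q = j"
proof -
  have "(k + (j + q - k) * ps * p) mod q = (k + (j + q - k) * ((p * ps) mod q)) mod q"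
    by (metis mod_add_right_eq mod_mult_right_eq mult.assoc mult.commute)
  also have "\<dots> = (j + q) mod q" using assms by simp
  finally show ?thesis using assms by simp
qed

definition digit_value :: "nat \<Rightarrow> nat \<Rightarrow> (nat \<Rightarrow> nat) \<Rightarrow> nat" where
  "digit_value d q c = (\<Sum>i<q. c i * d ^ (q - 1 - i))"

lemma digit_value_less:
  assumes "\<forall>i<q. c i < d"
  shows "digit_value d q c < d ^ q"
  using assms unfolding digit_value_def
proof (induction q arbitrary: c)
  case (Suc n)
  have "(\<Sum>i<Suc n. c i * d ^ (Suc n - 1 - i)) = c 0 * d ^ n + (\<Sum>i<n. c (Suc i) * d ^ (n - 1 - i))"
    by (subst sum.lessThan_Suc_shift) simp
  also have "\<dots> < c 0 * d ^ n + d ^ n"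
    using Suc.IH[of "\<lambda>i. c (Suc i)"] Suc.prems by simp
  also have "\<dots> = (c 0 + 1) * d ^ n"
    by simp
  also have "\<dots> \<le> d * d ^ n"
    using Suc.prems by (intro mult_right_mono) auto
  finally show ?case by simp
qed simp

lemma digit_value_shift:
  assumes "d \<ge> 1" "q \<ge> 1"
  shows "d * digit_value d q c = c 0 * (d ^ q - 1) + digit_value d q (\<lambda>i. c (Suc i mod q))"
proof -
  obtain r where q: "q = Suc r" using assms by (cases q) auto
  have "d * digit_value d q c = c 0 * d ^ q + (\<Sum>i<r. c (Suc i) * d ^ (r - i))"
    unfolding digit_value_def q sum_distrib_left
  proof (subst sum.lessThan_Suc_shift, intro arg_cong2[where f = "(+)"] sum.cong)
    fix i assume "i \<in> {..<r}"
    then have "r - i = Suc (r - Suc i)" by simp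
    then show "d * (c (Suc i) * d ^ (Suc r - 1 - Suc i)) = c (Suc i) * d ^ (r - i)"
      by simp
  qed simp_all
  moreover have "digit_value d q (\<lambda>i. c (Suc i mod q)) = (\<Sum>i<r. c (Suc i) * d ^ (r - i)) + c 0"
    unfolding digit_value_def q by (auto intro!: sum.cong)
  moreover have "c 0 * d ^ q = c 0 * (d ^ q - 1) + c 0"
    using assms by (simp add: diff_mult_distrib2)
  ultimately show ?thesis by simp
qed

lemma tuple_point_digit_value:
  assumes "d \<ge> 1"
  shows "tuple_point d q c = frac (real (digit_value d q c) / real (d ^ q - 1))"
  using assms unfolding tuple_point_def digit_value_def by (simp add: of_nat_diff)

lemma sigma_tuple_point:
  assumes "d \<ge> 2" "q \<ge> 1"
  shows "sigma d (tuple_point d q c) = tuple_point d q (\<lambda>i. c (Suc i mod q))"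
proof -
  let ?M = "real (d ^ q - 1)" and ?y = "real (digit_value d q c) / real (d ^ q - 1)"
  have "1 < real d ^ q" using assms by (intro one_less_power) auto
  then have "real d ^ q - 1 \<noteq> 0" by simp
  then have shift: "real d * ?y = real (c 0) + real (digit_value d q (\<lambda>i. c (Suc i mod q))) / ?M"
    using arg_cong[OF digit_value_shift[of d q c], of real] assms by (simp add: field_simps)
  have "sigma d (tuple_point d q c) = frac (real d * ?y - real d * of_int \<lfloor>?y\<rfloor>)"
    using assms by (simp add: sigma_def tuple_point_digit_value frac_def algebra_simps)
  also have "\<dots> = frac (real d * ?y)"
    by (metis frac_add_of_int_right diff_conv_add_uminus of_int_minus of_int_mult of_int_of_nat_eq)
  also have "\<dots> = tuple_point d q (\<lambda>i. c (Suc i mod q))"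
    unfolding shift using assms by (simp add: tuple_point_digit_value frac_add_int_left)
  finally show ?thesis .
qed

lemma funpow_sigma_0: "(sigma d ^^ n) 0 = 0"
  by (induction n) (simp_all add: sigma_def)

definition shift_point :: "nat \<Rightarrow> nat \<Rightarrow> (nat \<Rightarrow> nat) \<Rightarrow> nat \<Rightarrow> real" where
  "shift_point d q a j = tuple_point d q (\<lambda>i. a ((j + i) mod q))"

lemma shift_point_mod: "shift_point d q a (j mod q) = shift_point d q a j"
  unfolding shift_point_def by (simp add: mod_add_left_eq)

lemma shift_point_0: "shift_point d q a 0 = tuple_point d q a"
  unfolding shift_point_def tuple_point_def by (auto intro!: arg_cong[where f = frac] sum.cong)

lemma shift_digits_Suc: "(\<lambda>i. a ((j + Suc i mod q) mod q)) = (\<lambda>i. a ((Suc j + i) mod q))"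
  by (simp add: mod_add_right_eq)

lemma sigma_shift_point:
  assumes "d \<ge> 2" "q \<ge> 1"
  shows "sigma d (shift_point d q a j) = shift_point d q a (Suc j)"
  unfolding shift_point_def
  using sigma_tuple_point[OF assms, of "\<lambda>i. a ((j + i) mod q)"] by (simp only: shift_digits_Suc)

lemma funpow_sigma_shift_point:
  assumes "d \<ge> 2" "q \<ge> 1"
  shows "(sigma d ^^ n) (shift_point d q a j) = shift_point d q a (j + n)"
  by (induction n) (simp_all add: sigma_shift_point[OF assms])

lemma orbit_tuple_point:
  assumes "d \<ge> 2" "q \<ge> 1"
  shows "orbit d (tuple_point d q a) = shift_point d q a ` {..<q}"
proof -
  have "orbit d (tuple_point d q a) = range (shift_point d q a)"
    unfolding orbit_def shift_point_0[symmetric] funpow_sigma_shift_point[OF assms] by auto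
  also have "\<dots> = shift_point d q a ` {..<q}"
  proof -
    have "shift_point d q a j \<in> shift_point d q a ` {..<q}" for j
    proof -
      have "j mod q < q" using assms by simp
      then show ?thesis by (metis shift_point_mod imageI lessThan_iff)
    qed
    then show ?thesis by auto
  qed
  finally show ?thesis .
qed

text \<open>All digits equal to \<open>d - 1\<close> would make a point equal to \<open>frac 1 = 0\<close>, a fixed point
  of \<open>\<sigma>_d\<close>.\<close>

lemma shift_digit_value_less:
  assumes "d \<ge> 2" "q \<ge> 1" "\<forall>i<q. a i < d"
    and "card (orbit d (tuple_point d q a)) \<noteq> 1"
  shows "digit_value d q (\<lambda>i. a ((j + i) mod q)) < d ^ q - 1"
proof (rule ccontr)
  assume "\<not> ?thesis"
  moreover have "digit_value d q (\<lambda>i. a ((j + i) mod q)) < d ^ q"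
    using assms by (intro digit_value_less) auto
  ultimately have "digit_value d q (\<lambda>i. a ((j + i) mod q)) = d ^ q - 1"
    by simp
  moreover have "1 < real d ^ q" using assms by (intro one_less_power) auto
  ultimately have "shift_point d q a j = 0"
    using assms by (simp add: shift_point_def tuple_point_digit_value of_nat_diff)
  then have zero_from_j: "shift_point d q a (j + n) = 0" for n
    using funpow_sigma_shift_point[OF assms(1,2), of n a j] funpow_sigma_0 by simp
  have "shift_point d q a k = 0" for k
  proof -
    have "shift_point d q a k = shift_point d q a ((q * j + k) mod q)"
      by (simp add: shift_point_mod)
    also have "\<dots> = shift_point d q a (j + ((q - 1) * j + k))"
      using assms(2) by (cases q) (simp_all add: shift_point_mod add.assoc)
    finally have "shift_point d q a k = shift_point d q a (j + ((q - 1) * j + k))" .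
    then show ?thesis using zero_from_j by simp
  qed
  moreover have "0 \<in> {..<q}" using assms(2) by simp
  ultimately have "orbit d (tuple_point d q a) = {0}"
    by (auto simp: orbit_tuple_point[OF assms(1,2)] intro!: image_eqI[where x = 0])
  then show False using assms(4) by simp
qed

lemma shift_point_recurrence:
  assumes "d \<ge> 2" "q \<ge> 1" "\<forall>i<q. a i < d"
    and "card (orbit d (tuple_point d q a)) \<noteq> 1"
  shows "real d * shift_point d q a j = real (a (j mod q)) + shift_point d q a (Suc j)"
proof -
  define N where "N j = digit_value d q (\<lambda>i. a ((j + i) mod q))" for j
  define M where "M = real (d ^ q - 1)"
  have "1 < real d ^ q" using assms by (intro one_less_power) auto
  then have M_pos: "0 < M"
    using assms by (simp add: M_def of_nat_diff)
  have point_eq: "shift_point d q a j = real (N j) / M" for j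
  proof -
    have "real (N j) < M"
      using shift_digit_value_less[OF assms, of j] unfolding N_def M_def of_nat_less_iff .
    then have "real (N j) / M \<in> {0..<1}" using M_pos by simp
    moreover have "shift_point d q a j = frac (real (N j) / M)"
      using assms(1) unfolding shift_point_def N_def M_def by (simp add: tuple_point_digit_value)
    ultimately show ?thesis by simp
  qed
  have "d * N j = a (j mod q) * (d ^ q - 1) + N (Suc j)"
    using digit_value_shift[of d q "\<lambda>i. a ((j + i) mod q)"] assms
    unfolding N_def shift_digits_Suc by simp
  then have "real d * real (N j) = real (a (j mod q)) * M + real (N (Suc j))"
    unfolding M_def by (metis of_nat_add of_nat_mult)
  then show ?thesis
    using M_pos unfolding point_eq by (simp add: field_simps)
qed

lemma least_rotational_imp_strict_mono:
  fixes f :: "nat \<Rightarrow> real"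
  assumes "q \<ge> 1" "(p * ps) mod q = 1"
    and periodic: "\<And>j. f (j mod q) = f j"
    and step: "\<And>j. sigma d (f j) = f (Suc j)"
    and least: "\<forall>y\<in>f ` {..<q}. f 0 \<le> y"
    and "rotational d (f ` {..<q}) p q"
  shows "strict_mono_on {..<q} (\<lambda>k. f ((k * ps) mod q))"
proof -
  obtain e where e_mono: "strict_mono_on {..<q} e" and e_img: "e ` {..<q} = f ` {..<q}"
    and e_rot: "\<forall>i<q. sigma d (e i) = e ((i + p) mod q)"
    using assms(6) unfolding rotational_def by blast
  have q_pos: "0 < q" using assms(1) by simp
  have "e 0 = f 0"
  proof -
    have "f 0 \<in> e ` {..<q}" using e_img q_pos by simp
    then obtain j where j: "j < q" "e j = f 0" by auto
    have "e 0 \<in> f ` {..<q}" using e_img q_pos by (metis imageI lessThan_iff)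
    then have "f 0 \<le> e 0" using least by blast
    then show ?thesis
      using j strict_mono_onD[OF e_mono, of 0 j] by (cases "j = 0") auto
  qed
  then have e_iter: "e ((n * p) mod q) = f n" for n
  proof (induction n)
    case (Suc n)
    have "(Suc n * p) mod q = ((n * p) mod q + p) mod q"
      by (metis mod_add_left_eq add.commute mult_Suc)
    then have "e ((Suc n * p) mod q) = sigma d (e ((n * p) mod q))"
      using e_rot q_pos by simp
    also have "\<dots> = f (Suc n)"
      using Suc step by simp
    finally show ?case .
  qed simp
  have "e k = f ((k * ps) mod q)" if "k < q" for k
  proof -
    have "e k = e ((k * ps * p) mod q)"
      using mod_mult_inverse_cancel[OF assms(2) that] by simp
    also have "\<dots> = f ((k * ps) mod q)"
      using e_iter[of "k * ps"] periodic[of "k * ps"] by simp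
    finally show ?thesis .
  qed
  then show ?thesis
    using e_mono by (simp add: strict_mono_on_def)
qed

lemma strict_mono_imp_least_rotational:
  fixes f :: "nat \<Rightarrow> real"
  assumes "q \<ge> 1" "(p * ps) mod q = 1"
    and periodic: "\<And>j. f (j mod q) = f j"
    and step: "\<And>j. sigma d (f j) = f (Suc j)"
    and mono: "strict_mono_on {..<q} (\<lambda>k. f ((k * ps) mod q))" (is "strict_mono_on _ ?e")
  shows "(\<forall>y\<in>f ` {..<q}. f 0 \<le> y) \<and> rotational d (f ` {..<q}) p q"
proof -
  have q_pos: "0 < q" using assms(1) by simp
  have img: "?e ` {..<q} = f ` {..<q}"
  proof
    show "?e ` {..<q} \<subseteq> f ` {..<q}" using q_pos by auto
    show "f ` {..<q} \<subseteq> ?e ` {..<q}"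
    proof
      fix y assume "y \<in> f ` {..<q}"
      then obtain j where j: "j < q" "y = f j" by auto
      have "((j * p) mod q * ps) mod q = (j * ps * p) mod q"
        by (simp only: mod_mult_left_eq mult.assoc mult.commute[of p ps])
      then have "y = ?e ((j * p) mod q)"
        using j mod_mult_inverse_cancel[OF assms(2) j(1)] by simp
      then show "y \<in> ?e ` {..<q}" using q_pos by simp
    qed
  qed
  have "sigma d (?e i) = ?e ((i + p) mod q)" for i
  proof -
    have "sigma d (?e i) = f (Suc ((i * ps) mod q))"
      by (rule step)
    also have "\<dots> = f (Suc ((i * ps) mod q) mod q)"
      by (rule periodic[symmetric])
    also have "Suc ((i * ps) mod q) mod q = ((i + p) mod q * ps) mod q"
      by (simp add: mod_Suc_eq mod_mult_inverse_add[OF assms(2)])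
    finally show ?thesis .
  qed
  then have "rotational d (f ` {..<q}) p q"
    unfolding rotational_def using mono img by blast
  moreover have "f 0 \<le> y" if "y \<in> f ` {..<q}" for y
  proof -
    have "y \<in> ?e ` {..<q}" using that img by simp
    then obtain k where "k < q" "y = ?e k" by blast
    then show ?thesis
      using strict_mono_onD[OF mono, of 0 k] by (cases "k = 0") auto
  qed
  ultimately show ?thesis by blast
qed

text \<open>\<open>E k\<close> stands for the \<open>k\<close>-th point of the orbit in increasing order and \<open>b k\<close> for its
  leading digit; \<open>\<sigma>_d\<close> sends the \<open>k\<close>-th point to the \<open>(k+p)\<close>-th.\<close>

locale digit_recurrence =
  fixes d p q :: nat and E :: "nat \<Rightarrow> real" and b :: "nat \<Rightarrow> nat"
  assumes d_pos: "0 < d" and p_pos: "0 < p" and p_less: "p < q"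
    and E_bounds: "\<And>k. k < q \<Longrightarrow> 0 \<le> E k \<and> E k < 1"
    and recurrence: "\<And>k. k < q \<Longrightarrow> real d * E k = real (b k) + E ((k + p) mod q)"
begin

lemma digit_eq_floor:
  assumes "k < q"
  shows "\<lfloor>real d * E k\<rfloor> = int (b k)"
proof -
  have "(k + p) mod q < q" using assms by simp
  then show ?thesis
    using E_bounds recurrence[OF assms] by (intro floor_unique) auto
qed

lemma digit_mono:
  assumes "k < q" "k' < q" "E k \<le> E k'"
  shows "b k \<le> b k'"
proof -
  have "\<lfloor>real d * E k\<rfloor> \<le> \<lfloor>real d * E k'\<rfloor>"
    using assms(3) by (intro floor_mono mult_left_mono) auto
  then show ?thesis using digit_eq_floor assms(1,2) by simp
qed

lemma strict_mono_imp_digits: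
  assumes mono: "strict_mono_on {..<q} E"
  shows "(\<forall>k. Suc k < q \<longrightarrow> b k \<le> b (Suc k)) \<and> b (q - p - 1) < b (q - p)"
proof
  show digits_mono: "\<forall>k. Suc k < q \<longrightarrow> b k \<le> b (Suc k)"
  proof (intro allI impI)
    fix k assume "Suc k < q"
    then show "b k \<le> b (Suc k)"
      using strict_mono_onD[OF mono, of k "Suc k"] by (intro digit_mono) auto
  qed
  show "b (q - p - 1) < b (q - p)"
  proof (rule ccontr)
    let ?k = "q - p - 1"
    have k: "Suc ?k = q - p" "Suc ?k < q" "(?k + p) mod q = q - 1" "(q - p + p) mod q = 0"
      using p_pos p_less by auto
    assume "\<not> ?thesis"
    moreover have "b ?k \<le> b (Suc ?k)" using digits_mono k(2) by blast
    ultimately have "b ?k = b (Suc ?k)" using k(1) by simp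
    moreover have "real d * E ?k < real d * E (q - p)"
      using strict_mono_onD[OF mono, of ?k "q - p"] k d_pos by simp
    moreover have "real d * E ?k = real (b ?k) + E (q - 1)"
      using recurrence[of ?k] k by simp
    moreover have "real d * E (q - p) = real (b (q - p)) + E 0"
      using recurrence[of "q - p"] k by simp
    ultimately have "E (q - 1) < E 0"
      using k(1) by simp
    moreover have "E 0 < E (q - 1)" using mono k by (auto intro: strict_mono_onD)
    ultimately show False by simp
  qed
qed

lemma less_Suc_from_shifted:
  assumes "Suc k < q" "k \<noteq> q - p - 1" "b k \<le> b (Suc k)"
    and "E ((k + p) mod q) < E (Suc ((k + p) mod q))"
  shows "E k < E (Suc k)"
proof (cases "b k = b (Suc k)")
  case True
  have "(Suc k + p) mod q = Suc ((k + p) mod q)"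
    using Suc_add_mod(2)[of k q p] assms(1,2) p_less by simp
  then have "real d * E k < real d * E (Suc k)"
    using recurrence[of k] recurrence[of "Suc k"] assms(1,4) True by simp
  then show ?thesis using d_pos by simp
next
  case False
  show ?thesis
  proof (rule ccontr)
    assume "\<not> ?thesis"
    then have "b (Suc k) \<le> b k" using assms(1) by (intro digit_mono) auto
    then show False using False assms(3) by simp
  qed
qed

lemma digits_imp_strict_mono:
  assumes inverse: "(p * ps) mod q = 1"
    and digits_mono: "\<forall>k. Suc k < q \<longrightarrow> b k \<le> b (Suc k)"
    and digit_jump: "b (q - p - 1) < b (q - p)"
  shows "strict_mono_on {..<q} E"
proof -
  let ?gap = "q - p - 1"
  have gap: "Suc ?gap = q - p" "Suc ?gap < q" using p_pos p_less by auto
  have at_gap: "E ?gap < E (Suc ?gap)"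
  proof (rule ccontr)
    assume "\<not> ?thesis"
    then have "b (Suc ?gap) \<le> b ?gap" using gap by (intro digit_mono) auto
    then show False using digit_jump gap(1) by simp
  qed
  have propagate: "E k < E (Suc k)" if "Suc k < q" "(k + n * p) mod q = ?gap" for n k
    using that
  proof (induction n arbitrary: k)
    case (Suc n)
    show ?case
    proof (cases "k = ?gap")
      case False
      let ?k' = "(k + p) mod q"
      have "Suc ?k' < q"
        using Suc_add_mod(1)[of k q p] Suc.prems(1) p_less False by simp
      moreover have "(?k' + n * p) mod q = ?gap"
        using Suc.prems(2) by (simp add: mod_add_left_eq add.assoc)
      ultimately have "E ?k' < E (Suc ?k')" using Suc.IH by simp
      then show ?thesis
        using less_Suc_from_shifted[of k] digits_mono Suc.prems(1) False by simp
    qed (use at_gap in simp)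
  qed (use at_gap in simp)
  show ?thesis
    unfolding strict_mono_on_lessThan_iff
  proof (intro allI impI)
    fix k assume k: "Suc k < q"
    have "(k + ((?gap + q - k) * ps) * p) mod q = ?gap"
      using mod_add_mult_inverse[OF inverse, of k ?gap] k gap by (simp add: mult.assoc)
    then show "E k < E (Suc k)" using propagate k by blast
  qed
qed

lemma strict_mono_iff_digits:
  assumes "(p * ps) mod q = 1"
  shows "strict_mono_on {..<q} E
    \<longleftrightarrow> (\<forall>k. Suc k < q \<longrightarrow> b k \<le> b (Suc k)) \<and> b (q - p - 1) < b (q - p)"
  using strict_mono_imp_digits digits_imp_strict_mono[OF assms] by blast

end

lemma least_rotational_iff_strict_mono:
  assumes "d \<ge> 2" "q \<ge> 1" "(p * ps) mod q = 1"
  shows "((\<forall>y\<in>orbit d (tuple_point d q a). tuple_point d q a \<le> y) \<and>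
          rotational d (orbit d (tuple_point d q a)) p q)
    \<longleftrightarrow> strict_mono_on {..<q} (\<lambda>k. shift_point d q a ((k * ps) mod q))"
  unfolding orbit_tuple_point[OF assms(1,2)]
  unfolding shift_point_0[symmetric]
  using least_rotational_imp_strict_mono[where f = "shift_point d q a", OF assms(2,3)
      shift_point_mod sigma_shift_point[OF assms(1,2)]]
    strict_mono_imp_least_rotational[where f = "shift_point d q a", OF assms(2,3)
      shift_point_mod sigma_shift_point[OF assms(1,2)]]
  by blast

lemma digit_recurrence_shift_point:
  assumes "d \<ge> 2" "0 < p" "p < q" "(p * ps) mod q = 1" "\<forall>i<q. a i < d"
    and "card (orbit d (tuple_point d q a)) \<noteq> 1"
  shows "digit_recurrence d p q
    (\<lambda>k. shift_point d q a ((k * ps) mod q)) (\<lambda>k. a ((k * ps) mod q))"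
proof
  let ?x = "shift_point d q a"
  show "0 \<le> ?x ((k * ps) mod q) \<and> ?x ((k * ps) mod q) < 1" for k
    by (simp add: shift_point_def tuple_point_def frac_lt_1)
  show "real d * ?x ((k * ps) mod q) = real (a ((k * ps) mod q)) + ?x (((k + p) mod q * ps) mod q)"
    for k
  proof -
    have "?x (Suc ((k * ps) mod q)) = ?x (Suc ((k * ps) mod q) mod q)"
      by (rule shift_point_mod[symmetric])
    also have "\<dots> = ?x (((k + p) mod q * ps) mod q)"
      by (simp add: mod_Suc_eq mod_mult_inverse_add[OF assms(4)])
    finally show ?thesis
      using shift_point_recurrence[OF assms(1) _ assms(5,6)] assms(3) by simp
  qed
qed (use assms in auto)

theorem corollary3p2:
  fixes d q p ps :: nat and a :: "nat \<Rightarrow> nat"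
  assumes "d \<ge> 2" and "q \<ge> 2"
    and "1 \<le> p" and "p \<le> q - 1" and "coprime p q"
    and "ps < q" and "(p * ps) mod q = 1"
    and "\<forall>i<q. a i < d"
    and "card (orbit d (tuple_point d q a)) = q"
  shows "((\<forall>y\<in>orbit d (tuple_point d q a). tuple_point d q a \<le> y) \<and>
          rotational d (orbit d (tuple_point d q a)) p q)
     \<longleftrightarrow> ((\<forall>k. k \<le> q - 2 \<longrightarrow> a ((k * ps) mod q) \<le> a (((k + 1) * ps) mod q)) \<and>
          a (((q - p - 1) * ps) mod q) < a (((q - p) * ps) mod q))"
proof -
  have q: "q \<ge> 1" "0 < p" "p < q" "card (orbit d (tuple_point d q a)) \<noteq> 1"
    using assms(2,3,4,9) by auto
  interpret digit_recurrence d p q "\<lambda>k. shift_point d q a ((k * ps) mod q)" "\<lambda>k. a ((k * ps) mod q)"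
    using digit_recurrence_shift_point[OF assms(1) q(2,3) assms(7,8) q(4)] .
  show ?thesis
    unfolding least_rotational_iff_strict_mono[OF assms(1) q(1) assms(7)] strict_mono_iff_digits[OF assms(7)]
    using assms(2) by (simp add: Suc_le_eq[symmetric] le_diff_conv2)
qed

end
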